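(* Let $({}^bS^2,Z,\omega,\mu)$ be the $b$-symplectic sphere with cylindrical coordinates $(h,\theta)$, $-1<h<1$, with singular hypersurface $Z=\{h_z\}\times S^1$ for some $-1<h_z<1$, with the rotation action about the vertical axis and its moment map $\mu$. Then its Bohr-Sommerfeld quantization with sign $\tilde{Q}({}^bS^2)=\bigoplus_{b\in B_{BS}}\epsilon(b)\,\mathbb{C}(b)$ is a finite-dimensional vector space.
   Context: $\omega$ is a $b$-symplectic form on $S^2$ (a closed form of maximal rank as a section of $\Lambda^2$ of the $b$-cotangent bundle, singular along $Z$, e.g. $\frac{dh}{h-h_z}\wedge d\theta$ near $Z$), which is integral, with a prequantum line bundle $\mathbb{L}$ with connection of curvature $\omega$ on the complement of $Z$; $\mu$ is a $b$-function (of the form $c\log|h-h_z|+$smooth near $Z$), normalized compatibly with the connection. $B_{BS}$ is the Bohr-Sommerfeld set: the set of values $b$ of $\mu$ whose leaf $\mu^{-1}(b)$ (a circle or pole) admits a nonzero global flat section of $\mathbb{L}$. Here leaves in the northern part $S^2_+=(h_z,1)\times S^1$ and southern part $S^2_-=(-1,h_z)\times S^1$ are counted separately: the sign $\epsilon(b)=+1$ if $\mu^{-1}(b)$ is a Bohr-Sommerfeld leaf in $S^2_+$ and $\epsilon(b)=-1$ if it lies in $S^2_-$. $\mathbb{C}(b)$ is the one-dimensional $S^1$-representation of weight $b$, and the sum is a formal (virtual) sum of $T$-modules with integer multiplicities. *)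

theory Defs
  imports "HOL-Analysis.Analysis"
begin

text \<open>Points of S^2 are described by cylindrical coordinates (h, theta), h in [-1,1]
  (h = 1, -1 are the poles).  The rotation action is Hamiltonian with an
  S^1-invariant moment map, i.e. a function of h only; the identity
  iota_{d/dtheta} omega = - d mu forces omega = mu'(h) dh /\ dtheta, so the pair
  (omega, mu) is encoded by the function mu of h.\<close>

definition b_sphere_moment :: "real \<Rightarrow> (real \<Rightarrow> real) \<Rightarrow> bool" where
  "b_sphere_moment hz \<mu> \<longleftrightarrow>
     -1 < hz \<and> hz < 1 \<and>
     continuous_on ({-1..1} - {hz}) \<mu> \<and>
     (\<forall>h \<in> {-1<..<1} - {hz}. \<exists>d. (\<mu> has_real_derivative d) (at h) \<and> d \<noteq> 0) \<and>
     (\<exists>c g \<epsilon>. c \<noteq> 0 \<and> \<epsilon> > 0 \<and>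
        (\<forall>n. (deriv ^^ n) g differentiable_on {hz - \<epsilon> <..< hz + \<epsilon>}) \<and>
        (\<forall>h. 0 < \<bar>h - hz\<bar> \<and> \<bar>h - hz\<bar> < \<epsilon> \<longrightarrow> \<mu> h = c * ln \<bar>h - hz\<bar> + g h))"

text \<open>With mu normalized compatibly with the prequantum
  connection, the leaf mu^{-1}(b) (a circle {h} x S^1 or a pole) carries a nonzero
  global flat section iff b is an integer.\<close>

definition BS_north :: "real \<Rightarrow> (real \<Rightarrow> real) \<Rightarrow> int \<Rightarrow> bool" where
  "BS_north hz \<mu> b \<longleftrightarrow> (\<exists>h \<in> {hz<..1}. \<mu> h = of_int b)"

definition BS_south :: "real \<Rightarrow> (real \<Rightarrow> real) \<Rightarrow> int \<Rightarrow> bool" where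
  "BS_south hz \<mu> b \<longleftrightarrow> (\<exists>h \<in> {-1..<hz}. \<mu> h = of_int b)"

text \<open>The quantization with sign, as a virtual S^1-module: the function sending a
  weight b to the integer multiplicity of C(b) in the formal sum
  sum_{b in B_BS} epsilon(b) C(b) (northern leaves contribute +1, southern -1).\<close>

definition Q_sign :: "real \<Rightarrow> (real \<Rightarrow> real) \<Rightarrow> int \<Rightarrow> int" where
  "Q_sign hz \<mu> b = (if BS_north hz \<mu> b then 1 else 0) - (if BS_south hz \<mu> b then 1 else 0)"

definition finite_dim_virtual :: "(int \<Rightarrow> int) \<Rightarrow> bool" where
  "finite_dim_virtual m \<longleftrightarrow> finite {b. m b \<noteq> 0}"

end

theory Submission
  imports Defs
begin

text \<open>Near Z the moment map behaves like c ln|h - h_z|; replacing \<mu> by -\<mu> only reflects the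
  weights, so we may assume c > 0. Then \<mu> tends to -\<infinity> at Z from both sides while staying bounded
  above on the compact rest of the sphere. The images of the northern and southern parts are
  therefore intervals, both unbounded below and bounded above: every sufficiently low integer is a
  Bohr-Sommerfeld value on both sides and cancels, and no integer above the bound occurs, so only
  finitely many weights survive.\<close>

lemma filterlim_ln_dist_at_bot: "filterlim (\<lambda>h. ln \<bar>h - a\<bar>) at_bot (at (a :: real))"
proof -
  have "filterlim (\<lambda>h. \<bar>h - a\<bar>) (at_right 0) (at a)"
    unfolding filterlim_at by (auto intro!: tendsto_eq_intros simp: eventually_at_filter)
  then show ?thesis by (rule filterlim_compose[OF ln_at_0])
qed

lemma filterlim_log_singularity_at_bot:
  fixes a c :: real and g :: "real \<Rightarrow> real"
  assumes "c > 0" and "isCont g a"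
  shows "filterlim (\<lambda>h. c * ln \<bar>h - a\<bar> + g h) at_bot (at a)"
proof -
  have "(g \<longlongrightarrow> g a) (at a)" using assms(2) by (simp add: isCont_def)
  moreover have "filterlim (\<lambda>h. c * ln \<bar>h - a\<bar>) at_bot (at a)"
    using tendsto_const assms(1) filterlim_ln_dist_at_bot by (rule filterlim_tendsto_pos_mult_at_bot)
  ultimately show ?thesis
    by (subst add.commute) (rule filterlim_tendsto_add_at_bot_iff[THEN iffD2])
qed

lemma not_bdd_below_image_if_filterlim_at_bot:
  fixes f :: "'a \<Rightarrow> 'b :: {linorder_topology, no_bot}"
  assumes "filterlim f at_bot F" "F \<noteq> bot" "eventually (\<lambda>x. x \<in> A) F"
  shows "\<not> bdd_below (f ` A)"
proof
  assume "bdd_below (f ` A)"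
  then obtain B where B: "\<And>x. x \<in> A \<Longrightarrow> B \<le> f x" by (auto simp: bdd_below_def)
  obtain B' where "B' < B" using lt_ex by blast
  have "eventually (\<lambda>x. f x \<le> B') F" using assms(1) by (simp add: filterlim_at_bot)
  with assms(3) have "eventually (\<lambda>x. False) F"
    by eventually_elim (use B \<open>B' < B\<close> in fastforce)
  with assms(2) show False by simp
qed

lemma bdd_above_image_if_filterlim_at_bot:
  fixes f :: "'a :: metric_space \<Rightarrow> real"
  assumes "compact K" "continuous_on (K - {a}) f" "filterlim f at_bot (at a)"
  shows "bdd_above (f ` (K - {a}))"
proof -
  have "eventually (\<lambda>x. f x \<le> 0) (at a)" using assms(3) by (simp add: filterlim_at_bot)
  then obtain d where "d > 0" and nonpos: "\<And>x. x \<noteq> a \<Longrightarrow> dist x a < d \<Longrightarrow> f x \<le> 0"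
    unfolding eventually_at by blast
  have "compact (K - ball a d)" using assms(1) by (simp add: compact_diff)
  moreover have "continuous_on (K - ball a d) f"
    by (rule continuous_on_subset[OF assms(2)]) (use \<open>d > 0\<close> in auto)
  ultimately have "bounded (f ` (K - ball a d))" by (intro compact_imp_bounded compact_continuous_image)
  then have "bdd_above (f ` (K - ball a d) \<union> {..0})" by (simp add: bounded_imp_bdd_above)
  moreover have "f ` (K - {a}) \<subseteq> f ` (K - ball a d) \<union> {..0}"
    using nonpos by (fastforce simp: dist_commute)
  ultimately show ?thesis by (rule bdd_above_mono)
qed

lemma bounded_diff_if_not_bdd_below:
  fixes N S :: "real set"
  assumes "bdd_above N" "is_interval S" "s \<in> S" "\<not> bdd_below S"
  shows "bounded (N - S)"
proof -
  have "x \<in> {s..Sup N}" if x: "x \<in> N - S" for x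
  proof -
    obtain y where "y \<in> S" "y < x" using assms(4) by (meson bdd_below_def not_le)
    then have "s < x" using x assms(2,3) unfolding is_interval_1 by (meson DiffD2 less_imp_le not_le)
    moreover have "x \<le> Sup N" using x assms(1) by (auto intro: cSup_upper)
    ultimately show ?thesis by simp
  qed
  then have "N - S \<subseteq> {s..Sup N}" by blast
  then show ?thesis using bounded_closed_interval bounded_subset by blast
qed

lemma finite_ints_in_bounded:
  fixes T :: "real set"
  assumes "bounded T"
  shows "finite {b :: int. of_int b \<in> T}"
proof -
  obtain B where B: "\<And>x. x \<in> T \<Longrightarrow> \<bar>x\<bar> \<le> B" using assms by (auto simp: bounded_real)
  have "b \<in> {-\<lceil>B\<rceil>..\<lceil>B\<rceil>}" if "of_int b \<in> T" for b
    using B[OF that] by (simp add: abs_le_iff) linarith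
  then show ?thesis by (auto intro: finite_subset[of _ "{-\<lceil>B\<rceil>..\<lceil>B\<rceil>}"])
qed

lemma BS_north_iff: "BS_north hz \<mu> b \<longleftrightarrow> of_int b \<in> \<mu> ` {hz<..1}"
  unfolding BS_north_def by force

lemma BS_south_iff: "BS_south hz \<mu> b \<longleftrightarrow> of_int b \<in> \<mu> ` {-1..<hz}"
  unfolding BS_south_def by force

lemma Q_sign_nonzero_iff:
  "Q_sign hz \<mu> b \<noteq> 0 \<longleftrightarrow>
     of_int b \<in> (\<mu> ` {hz<..1} - \<mu> ` {-1..<hz}) \<union> (\<mu> ` {-1..<hz} - \<mu> ` {hz<..1})"
  by (auto simp: Q_sign_def BS_north_iff BS_south_iff)

lemma Q_sign_uminus: "Q_sign hz (\<lambda>h. - \<mu> h) b = Q_sign hz \<mu> (- b)"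
proof -
  have "(- \<mu> h = of_int b) = (\<mu> h = of_int (- b))" for h by auto
  then show ?thesis unfolding Q_sign_def BS_north_def BS_south_def by simp
qed

lemma finite_dim_virtual_Q_sign_uminus:
  "finite_dim_virtual (Q_sign hz (\<lambda>h. - \<mu> h)) \<longleftrightarrow> finite_dim_virtual (Q_sign hz \<mu>)"
proof -
  have "{b. Q_sign hz (\<lambda>h. - \<mu> h) b \<noteq> 0} = uminus -` {b. Q_sign hz \<mu> b \<noteq> 0}"
    by (simp add: Q_sign_uminus vimage_def)
  then show ?thesis
    unfolding finite_dim_virtual_def by (simp only: finite_vimage_iff[OF bij_uminus])
qed

lemma finite_dim_virtual_Q_sign_if_filterlim_at_bot:
  fixes hz :: real and \<mu> :: "real \<Rightarrow> real"
  assumes hz: "-1 < hz" "hz < 1"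
    and cont: "continuous_on ({-1..1} - {hz}) \<mu>"
    and lim: "filterlim \<mu> at_bot (at hz)"
  shows "finite_dim_virtual (Q_sign hz \<mu>)"
proof -
  define N where "N = \<mu> ` {hz<..1}"
  define S where "S = \<mu> ` {-1..<hz}"
  have "bdd_above (\<mu> ` ({-1..1} - {hz}))"
    using compact_Icc cont lim by (rule bdd_above_image_if_filterlim_at_bot)
  moreover have "N \<subseteq> \<mu> ` ({-1..1} - {hz})" "S \<subseteq> \<mu> ` ({-1..1} - {hz})"
    using hz unfolding N_def S_def by auto
  ultimately have "bdd_above N" "bdd_above S" by (auto intro: bdd_above_mono)
  have "is_interval N" "is_interval S"
    unfolding N_def S_def is_interval_connected_1
    using hz by (auto intro!: connected_continuous_image continuous_on_subset[OF cont])
  have "eventually (\<lambda>h. h \<in> {hz<..1}) (at_right hz)"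
    using eventually_at_right_real[OF hz(2)] by eventually_elim auto
  then have "\<not> bdd_below N"
    unfolding N_def using lim
    by (intro not_bdd_below_image_if_filterlim_at_bot) (auto simp: filterlim_at_split)
  have "eventually (\<lambda>h. h \<in> {-1..<hz}) (at_left hz)"
    using eventually_at_left_real[OF hz(1)] by eventually_elim auto
  then have "\<not> bdd_below S"
    unfolding S_def using lim
    by (intro not_bdd_below_image_if_filterlim_at_bot) (auto simp: filterlim_at_split)
  have "\<mu> 1 \<in> N" "\<mu> (-1) \<in> S" using hz unfolding N_def S_def by auto
  have "bounded (N - S)" by (rule bounded_diff_if_not_bdd_below) fact+
  moreover have "bounded (S - N)" by (rule bounded_diff_if_not_bdd_below) fact+
  ultimately have "bounded ((N - S) \<union> (S - N))" by simp
  then show ?thesis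
    unfolding finite_dim_virtual_def Q_sign_nonzero_iff N_def S_def
    by (rule finite_ints_in_bounded)
qed

lemma b_sphere_moment_filterlim_at_bot:
  assumes "b_sphere_moment hz \<mu>"
  shows "filterlim \<mu> at_bot (at hz) \<or> filterlim (\<lambda>h. - \<mu> h) at_bot (at hz)"
proof -
  obtain c g \<epsilon> where "c \<noteq> 0" "\<epsilon> > 0"
    and smooth: "\<And>n. (deriv ^^ n) g differentiable_on {hz - \<epsilon> <..< hz + \<epsilon>}"
    and log_sing: "\<And>h. 0 < \<bar>h - hz\<bar> \<and> \<bar>h - hz\<bar> < \<epsilon> \<Longrightarrow> \<mu> h = c * ln \<bar>h - hz\<bar> + g h"
    using assms unfolding b_sphere_moment_def by blast
  have "continuous_on {hz - \<epsilon> <..< hz + \<epsilon>} g"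
    using smooth[of 0] by (simp add: differentiable_imp_continuous_on)
  then have "isCont g hz" using \<open>\<epsilon> > 0\<close> by (simp add: continuous_on_eq_continuous_at)
  have near: "eventually (\<lambda>h. \<mu> h = c * ln \<bar>h - hz\<bar> + g h) (at hz)"
    unfolding eventually_at using \<open>\<epsilon> > 0\<close> log_sing by (auto simp: dist_real_def)
  show ?thesis
  proof (cases "c > 0")
    case True
    then have "filterlim \<mu> at_bot (at hz)"
      using filterlim_log_singularity_at_bot[OF True \<open>isCont g hz\<close>] filterlim_cong[OF refl refl near]
      by simp
    then show ?thesis ..
  next
    case False
    with \<open>c \<noteq> 0\<close> have "-c > 0" by simp
    moreover have "isCont (\<lambda>h. - g h) hz" using \<open>isCont g hz\<close> by simp
    ultimately have "filterlim (\<lambda>h. - c * ln \<bar>h - hz\<bar> + - g h) at_bot (at hz)"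
      by (rule filterlim_log_singularity_at_bot)
    moreover have "eventually (\<lambda>h. - \<mu> h = - c * ln \<bar>h - hz\<bar> + - g h) (at hz)"
      using near by eventually_elim simp
    ultimately have "filterlim (\<lambda>h. - \<mu> h) at_bot (at hz)"
      by (simp add: filterlim_cong)
    then show ?thesis ..
  qed
qed

theorem lemma4p6:
  fixes hz :: real and \<mu> :: "real \<Rightarrow> real"
  assumes "b_sphere_moment hz \<mu>"
  shows "finite_dim_virtual (Q_sign hz \<mu>)"
proof -
  have hz: "-1 < hz" "hz < 1" and cont: "continuous_on ({-1..1} - {hz}) \<mu>"
    using assms unfolding b_sphere_moment_def by auto
  from b_sphere_moment_filterlim_at_bot[OF assms] show ?thesis
  proof
    assume "filterlim \<mu> at_bot (at hz)"
    then show ?thesis using hz cont by (intro finite_dim_virtual_Q_sign_if_filterlim_at_bot)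
  next
    assume "filterlim (\<lambda>h. - \<mu> h) at_bot (at hz)"
    moreover have "continuous_on ({-1..1} - {hz}) (\<lambda>h. - \<mu> h)"
      using cont by (intro continuous_intros)
    ultimately show ?thesis
      using hz finite_dim_virtual_Q_sign_if_filterlim_at_bot finite_dim_virtual_Q_sign_uminus
      by blast
  qed
qed

end
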